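(* Let $e\ge1$ and let $A$ be the binomial nilpotent $\mathbb{F}_p$-algebra in $e$ variables, i.e. the ideal generated by $x_1,\dots,x_e$ in $\mathbb{F}_p[x_1,\dots,x_e]/(x_1^2,\dots,x_e^2)$; it has dimension $2^e-1$, with basis the nonempty squarefree monomials, and satisfies $A^e\ne0$, $A^{e+1}=0$. Then for every $t$ with $1\le t\le e$ and every $u\in N_t\setminus N_{t-1}$, \[ \dim_{\mathbb{F}_p}(\mathbb{F}_pu+Au)\ge 2^{t-1}. \]
   Context: $N_k=\{a\in A: y_1\cdots y_k a=0\ \forall y_1,\dots,y_k\in A\}$, $N_0=0$. *)

theory Defs
  imports Complex_Main "HOL-Library.Function_Algebras" "HOL-Computational_Algebra.Primes"
begin

text \<open>An element is represented by its coefficient function on squarefree monomials,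
  a monomial being identified with its (finite) set of variables S.\<close>

definition bn_alg :: "nat \<Rightarrow> (nat set \<Rightarrow> 'a::field) set" where
  "bn_alg e = {f. \<forall>S. f S \<noteq> 0 \<longrightarrow> S \<noteq> {} \<and> S \<subseteq> {..<e}}"

text \<open>Multiplication: x_T * x_U = x_(T \<union> U) if T, U disjoint, and 0 otherwise.\<close>
definition bn_mult :: "nat \<Rightarrow> (nat set \<Rightarrow> 'a::field) \<Rightarrow> (nat set \<Rightarrow> 'a) \<Rightarrow> (nat set \<Rightarrow> 'a)" where
  "bn_mult e f g = (\<lambda>S. if S \<subseteq> {..<e} then (\<Sum>T\<in>Pow S. f T * g (S - T)) else 0)"

definition bn_scale :: "'a::field \<Rightarrow> (nat set \<Rightarrow> 'a) \<Rightarrow> (nat set \<Rightarrow> 'a)" where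
  "bn_scale c f = (\<lambda>S. c * f S)"

definition bn_N :: "nat \<Rightarrow> nat \<Rightarrow> (nat set \<Rightarrow> 'a::field) set" where
  "bn_N e k = {a \<in> bn_alg e. \<forall>ys. length ys = k \<and> set ys \<subseteq> bn_alg e \<longrightarrow>
                 foldr (bn_mult e) ys a = 0}"

end

theory Submission
  imports Defs
begin

text \<open>If \<open>u \<notin> N\<^sub>t\<^sub>-\<^sub>1\<close>, then \<open>u\<close> has a monomial \<open>x\<^sub>S\<close> of degree at most \<open>e - t + 1\<close>, because
  multiplying by an element of \<open>A\<close> raises the lowest degree of a monomial by at least one.
  Hence there is a set \<open>R\<close> of \<open>t - 1\<close> variables disjoint from \<open>S\<close>. The \<open>2\<^sup>t\<^sup>-\<^sup>1\<close> products
  \<open>x\<^sub>W u\<close> with \<open>W \<subseteq> R\<close> lie in \<open>\<bbbF>\<^sub>pu + Au\<close>, and they are unitriangular with respect to the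
  coefficients at the monomials \<open>x\<^sub>S\<^sub>\<union>\<^sub>W\<close>: the coefficient of \<open>x\<^sub>W' u\<close> at \<open>x\<^sub>S\<^sub>\<union>\<^sub>W\<close> vanishes
  unless \<open>W' \<subseteq> W\<close>, and equals \<open>u\<^sub>S \<noteq> 0\<close> if \<open>W' = W\<close>. So they are linearly independent.\<close>

interpretation bn: vector_space "bn_scale :: 'a::field \<Rightarrow> (nat set \<Rightarrow> 'a) \<Rightarrow> _"
  by unfold_locales (auto simp: bn_scale_def fun_eq_iff algebra_simps)

lemma (in vector_space) card_le_dim_if_finite:
  assumes "finite V" "B \<subseteq> V" "independent B"
  shows "card B \<le> dim V"
proof -
  obtain A where A: "A \<subseteq> V" "independent A" "V \<subseteq> span A" "card A = dim V"
    by (rule basis_exists)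
  have "finite A"
    using A(1) assms(1) by (rule finite_subset)
  moreover have "B \<subseteq> span A"
    using assms(2) A(3) by (rule order_trans)
  ultimately have "card B \<le> card A"
    using independent_span_bound[OF _ assms(3)] by blast
  with A(4) show ?thesis by simp
qed

lemma sum_fun_apply: "(\<Sum>i\<in>I. f i) x = (\<Sum>i\<in>I. f i x :: 'b::comm_monoid_add)"
  by (induction I rule: infinite_finite_induct) auto

lemma inj_on_if_triangular:
  fixes g :: "'i::order \<Rightarrow> 'x \<Rightarrow> 'a::zero"
  assumes diag: "\<And>i. i \<in> I \<Longrightarrow> g i (p i) \<noteq> 0"
    and triangular: "\<And>i j. i \<in> I \<Longrightarrow> j \<in> I \<Longrightarrow> g j (p i) \<noteq> 0 \<Longrightarrow> j \<le> i"
  shows "inj_on g I"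
proof (rule inj_onI)
  fix i j assume "i \<in> I" "j \<in> I" "g i = g j"
  then have "j \<le> i" "i \<le> j"
    using diag triangular by metis+
  then show "i = j" by simp
qed

lemma bn_independent_if_triangular:
  fixes g :: "'i::order \<Rightarrow> nat set \<Rightarrow> 'a::field"
  assumes "finite I"
    and diag: "\<And>i. i \<in> I \<Longrightarrow> g i (p i) \<noteq> 0"
    and triangular: "\<And>i j. i \<in> I \<Longrightarrow> j \<in> I \<Longrightarrow> g j (p i) \<noteq> 0 \<Longrightarrow> j \<le> i"
  shows "bn.independent (g ` I)"
proof -
  have inj: "inj_on g I"
    using diag triangular by (rule inj_on_if_triangular)
  show ?thesis
  proof (rule bn.independent_if_scalars_zero)
    show "finite (g ` I)" using \<open>finite I\<close> by simp
  next
    fix c x assume sum: "(\<Sum>x\<in>g ` I. bn_scale (c x) x) = 0" and "x \<in> g ` I"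
    define d where "d i = c (g i)" for i
    have sum0: "(\<Sum>j\<in>I. bn_scale (d j) (g j)) = 0"
      using sum by (simp add: sum.reindex[OF inj] d_def)
    show "c x = 0"
    proof (rule ccontr)
      assume "c x \<noteq> 0"
      then have "{i \<in> I. d i \<noteq> 0} \<noteq> {}"
        using \<open>x \<in> g ` I\<close> by (auto simp: d_def)
      \<comment> \<open>evaluate at the point of a minimal index with nonzero coefficient\<close>
      then obtain i where i: "i \<in> I" "d i \<noteq> 0"
        and minimal: "\<And>j. j \<in> I \<Longrightarrow> d j \<noteq> 0 \<Longrightarrow> j \<le> i \<Longrightarrow> j = i"
        using finite_has_minimal[of "{i \<in> I. d i \<noteq> 0}"] \<open>finite I\<close> by auto
      have "0 = (\<Sum>j\<in>I. bn_scale (d j) (g j)) (p i)"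
        using sum0 by simp
      also have "\<dots> = (\<Sum>j\<in>I. d j * g j (p i))"
        by (simp add: sum_fun_apply bn_scale_def)
      also have "\<dots> = d i * g i (p i)"
      proof -
        have "(\<Sum>j\<in>I - {i}. d j * g j (p i)) = 0"
          using minimal triangular i(1) by (intro sum.neutral) force
        then show ?thesis
          using sum.remove[OF \<open>finite I\<close> i(1), of "\<lambda>j. d j * g j (p i)"] by simp
      qed
      finally show False
        using i diag by simp
    qed
  qed
qed

lemma bn_mult_nonzeroE:
  assumes "bn_mult e f g S \<noteq> 0"
  obtains T where "S \<subseteq> {..<e}" "T \<subseteq> S" "f T * g (S - T) \<noteq> 0"
proof -
  have S: "S \<subseteq> {..<e}"
    using assms by (auto simp: bn_mult_def split: if_splits)
  then have "(\<Sum>T\<in>Pow S. f T * g (S - T)) \<noteq> 0"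
    using assms by (simp add: bn_mult_def)
  then obtain T where "T \<in> Pow S" "f T * g (S - T) \<noteq> 0"
    using sum.not_neutral_contains_not_neutral by blast
  with S that show ?thesis by blast
qed

lemma bn_mult_in_bn_alg:
  assumes "f \<in> bn_alg e"
  shows "bn_mult e f g \<in> bn_alg e"
  unfolding bn_alg_def
proof (intro CollectI allI impI)
  fix S assume "bn_mult e f g S \<noteq> 0"
  then obtain T where "S \<subseteq> {..<e}" "T \<subseteq> S" "f T \<noteq> 0"
    by (auto elim: bn_mult_nonzeroE)
  with assms show "S \<noteq> {} \<and> S \<subseteq> {..<e}"
    by (auto simp: bn_alg_def)
qed

lemma foldr_bn_mult_in_bn_alg:
  "set ys \<subseteq> bn_alg e \<Longrightarrow> u \<in> bn_alg e \<Longrightarrow> foldr (bn_mult e) ys u \<in> bn_alg e"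
  by (induction ys) (auto intro: bn_mult_in_bn_alg)

lemma bn_mult_card_ge:
  assumes f: "f \<in> bn_alg e" and g: "\<And>T. g T \<noteq> 0 \<Longrightarrow> m \<le> card T"
    and nz: "bn_mult e f g S \<noteq> 0"
  shows "Suc m \<le> card S"
proof -
  obtain T where S: "S \<subseteq> {..<e}" and T: "T \<subseteq> S" "f T * g (S - T) \<noteq> 0"
    using nz by (rule bn_mult_nonzeroE)
  have "finite S"
    using S by (rule finite_subset) simp
  have "T \<noteq> {}"
    using f T(2) by (auto simp: bn_alg_def)
  then have "1 \<le> card T"
    using T(1) \<open>finite S\<close> by (simp add: Suc_leI card_gt_0_iff finite_subset)
  moreover have "m \<le> card (S - T)"
    using g T(2) by simp
  moreover have "card S = card T + card (S - T)"
    using T(1) \<open>finite S\<close> by (simp add: card_Diff_subset card_mono finite_subset)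
  ultimately show ?thesis by linarith
qed

lemma foldr_bn_mult_card_ge:
  assumes "set ys \<subseteq> bn_alg e" and "\<And>T. u T \<noteq> 0 \<Longrightarrow> m \<le> card T"
  shows "foldr (bn_mult e) ys u S \<noteq> 0 \<Longrightarrow> m + length ys \<le> card S"
  using assms(1)
proof (induction ys arbitrary: S)
  case Nil
  then show ?case using assms(2) by simp
next
  case (Cons y ys)
  have "y \<in> bn_alg e" and "\<And>T. foldr (bn_mult e) ys u T \<noteq> 0 \<Longrightarrow> m + length ys \<le> card T"
    using Cons.prems(2) by (auto intro: Cons.IH)
  with Cons.prems(1) show ?case
    using bn_mult_card_ge[of y e "foldr (bn_mult e) ys u" "m + length ys" S] by simp
qed

lemma bn_N_if_card_gt:
  assumes u: "u \<in> bn_alg e" and high: "\<And>S. u S \<noteq> 0 \<Longrightarrow> e < card S + k"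
  shows "u \<in> bn_N e k"
  unfolding bn_N_def
proof (intro CollectI conjI u allI impI)
  fix ys :: "(nat set \<Rightarrow> 'a) list"
  assume ys: "length ys = k \<and> set ys \<subseteq> bn_alg e"
  show "foldr (bn_mult e) ys u = 0"
  proof
    fix S
    show "foldr (bn_mult e) ys u S = 0 S"
    proof (rule ccontr)
      assume "foldr (bn_mult e) ys u S \<noteq> 0 S"
      then have nz: "foldr (bn_mult e) ys u S \<noteq> 0" by simp
      have "e + 1 - k \<le> card T" if "u T \<noteq> 0" for T
        using high[OF that] by linarith
      then have "e + 1 - k + length ys \<le> card S"
        using foldr_bn_mult_card_ge[of ys e u "e + 1 - k" S] ys nz by blast
      moreover have "foldr (bn_mult e) ys u \<in> bn_alg e"
        using ys u by (intro foldr_bn_mult_in_bn_alg) simp_all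
      then have "S \<subseteq> {..<e}"
        using nz by (simp add: bn_alg_def)
      then have "card S \<le> card {..<e}"
        by (intro card_mono) simp_all
      ultimately show False
        using ys by simp
    qed
  qed
qed

lemma bn_low_degree_monomial_if_not_in_bn_N:
  assumes "u \<in> bn_alg e" and "u \<notin> bn_N e k"
  obtains S where "u S \<noteq> 0" and "card S + k \<le> e"
proof -
  obtain S where "u S \<noteq> 0" "\<not> e < card S + k"
    using assms bn_N_if_card_gt[of u e k] by blast
  with that show ?thesis by simp
qed

definition bn_monomial :: "nat set \<Rightarrow> nat set \<Rightarrow> 'a::field" where
  "bn_monomial W = (\<lambda>T. if T = W then 1 else 0)"

lemma bn_mult_monomial:
  "bn_mult e (bn_monomial W) u M = (if M \<subseteq> {..<e} \<and> W \<subseteq> M then u (M - W) else 0)"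
proof (cases "M \<subseteq> {..<e}")
  case True
  then have "finite M" by (rule finite_subset) simp
  have "(\<Sum>T\<in>Pow M. bn_monomial W T * u (M - T)) = (\<Sum>T\<in>Pow M. if W = T then u (M - T) else 0)"
    by (rule sum.cong) (auto simp: bn_monomial_def)
  also have "\<dots> = (if W \<in> Pow M then u (M - W) else 0)"
    using \<open>finite M\<close> by (simp add: sum.delta)
  finally show ?thesis using True by (simp add: bn_mult_def)
qed (simp add: bn_mult_def)

definition bn_cyclic_submodule :: "nat \<Rightarrow> (nat set \<Rightarrow> 'a::field) \<Rightarrow> (nat set \<Rightarrow> 'a) set" where
  "bn_cyclic_submodule e u = {bn_scale c u + bn_mult e a u | c a. a \<in> bn_alg e}"

lemma bn_cyclic_submoduleI:
  "a \<in> bn_alg e \<Longrightarrow> bn_scale c u + bn_mult e a u \<in> bn_cyclic_submodule e u"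
  by (auto simp: bn_cyclic_submodule_def)

lemma bn_mult_monomial_in_cyclic_submodule:
  assumes u: "u \<in> bn_alg e" and W: "W \<subseteq> {..<e}"
  shows "bn_mult e (bn_monomial W) u \<in> bn_cyclic_submodule e u"
proof (cases "W = {}")
  case True
  have "bn_mult e (bn_monomial W) u = u"
    using u True by (auto simp: fun_eq_iff bn_mult_monomial bn_alg_def)
  also have "u = bn_scale 1 u + bn_mult e 0 u"
    by (simp add: fun_eq_iff bn_scale_def bn_mult_def)
  finally show ?thesis
    by (rule ssubst) (rule bn_cyclic_submoduleI, simp add: bn_alg_def)
next
  case False
  have "bn_monomial W \<in> bn_alg e"
    using False W by (auto simp: bn_alg_def bn_monomial_def)
  then have "bn_scale 0 u + bn_mult e (bn_monomial W) u \<in> bn_cyclic_submodule e u"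
    by (rule bn_cyclic_submoduleI)
  then show ?thesis
    by simp
qed

lemma bn_cyclic_submodule_subset_bn_alg:
  assumes u: "u \<in> bn_alg e"
  shows "bn_cyclic_submodule e u \<subseteq> bn_alg e"
proof
  fix v assume "v \<in> bn_cyclic_submodule e u"
  then obtain c a where v: "v = bn_scale c u + bn_mult e a u" and "a \<in> bn_alg e"
    by (auto simp: bn_cyclic_submodule_def)
  then have "bn_mult e a u \<in> bn_alg e"
    by (intro bn_mult_in_bn_alg)
  show "v \<in> bn_alg e"
    unfolding bn_alg_def
  proof (intro CollectI allI impI)
    fix S assume "v S \<noteq> 0"
    then have "u S \<noteq> 0 \<or> bn_mult e a u S \<noteq> 0"
      unfolding v by (auto simp: bn_scale_def)
    then show "S \<noteq> {} \<and> S \<subseteq> {..<e}"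
      using u \<open>bn_mult e a u \<in> bn_alg e\<close> by (auto simp: bn_alg_def)
  qed
qed

lemma finite_bn_alg: "finite (bn_alg e :: (nat set \<Rightarrow> 'a::{field,finite}) set)"
proof -
  have "bn_alg e \<subseteq> {f :: nat set \<Rightarrow> 'a.
          \<forall>S. (S \<in> Pow {..<e} \<longrightarrow> f S \<in> UNIV) \<and> (S \<notin> Pow {..<e} \<longrightarrow> f S = 0)}"
    by (auto simp: bn_alg_def)
  moreover have "finite {f :: nat set \<Rightarrow> 'a.
          \<forall>S. (S \<in> Pow {..<e} \<longrightarrow> f S \<in> UNIV) \<and> (S \<notin> Pow {..<e} \<longrightarrow> f S = 0)}"
    by (rule finite_set_of_finite_funs) simp_all
  ultimately show ?thesis
    by (rule finite_subset)
qed

lemma bn_monomial_multiples_independent: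
  assumes "u S \<noteq> 0" "S \<subseteq> {..<e}" "R \<subseteq> {..<e}" "R \<inter> S = {}"
  defines "g \<equiv> \<lambda>W. bn_mult e (bn_monomial W) u"
  shows "inj_on g (Pow R)" and "bn.independent (g ` Pow R)"
proof -
  have diag: "g W (S \<union> W) \<noteq> 0" if "W \<in> Pow R" for W
  proof -
    have "S \<union> W - W = S" using that assms(4) by auto
    then show ?thesis using that assms(1-3) by (auto simp: g_def bn_mult_monomial)
  qed
  have triangular: "W' \<subseteq> W" if "W' \<in> Pow R" "g W' (S \<union> W) \<noteq> 0" for W W'
  proof -
    have "W' \<subseteq> S \<union> W" using that(2) by (auto simp: g_def bn_mult_monomial split: if_splits)
    then show ?thesis using that(1) assms(4) by auto
  qed
  show "inj_on g (Pow R)"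
    using diag triangular by (rule inj_on_if_triangular)
  have "finite R" using assms(3) by (rule finite_subset) simp
  then show "bn.independent (g ` Pow R)"
    using diag triangular by (intro bn_independent_if_triangular) auto
qed

lemma bn_dim_cyclic_submodule_ge:
  fixes u :: "nat set \<Rightarrow> 'a::{field,finite}"
  assumes u: "u \<in> bn_alg e" and S: "u S \<noteq> 0" and R: "R \<subseteq> {..<e}" "R \<inter> S = {}"
  shows "2 ^ card R \<le> bn.dim (bn_cyclic_submodule e u)"
proof -
  let ?g = "\<lambda>W. bn_mult e (bn_monomial W) u"
  have "S \<subseteq> {..<e}"
    using u S by (simp add: bn_alg_def)
  note independent = bn_monomial_multiples_independent[where u = u and S = S, OF S this R]
  have "finite R"
    using R(1) by (rule finite_subset) simp
  then have "2 ^ card R = card (?g ` Pow R)"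
    by (simp add: card_image[OF independent(1)] card_Pow)
  also have "\<dots> \<le> bn.dim (bn_cyclic_submodule e u)"
  proof (rule bn.card_le_dim_if_finite[OF _ _ independent(2)])
    show "finite (bn_cyclic_submodule e u)"
      using bn_cyclic_submodule_subset_bn_alg[OF u] finite_bn_alg by (rule finite_subset)
    show "?g ` Pow R \<subseteq> bn_cyclic_submodule e u"
      using bn_mult_monomial_in_cyclic_submodule[OF u] R(1) by auto
  qed
  finally show ?thesis .
qed

theorem proposition4p3:
  fixes e t :: nat and u :: "nat set \<Rightarrow> 'a::{field,finite}"
  assumes "prime (card (UNIV :: 'a set))"
    and "e \<ge> 1" and "1 \<le> t" and "t \<le> e"
    and "u \<in> bn_N e t - bn_N e (t - 1)"
  shows "vector_space.dim bn_scale
           {bn_scale c u + bn_mult e a u | c a. a \<in> bn_alg e} \<ge> 2 ^ (t - 1)"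
proof -
  have u: "u \<in> bn_alg e" and "u \<notin> bn_N e (t - 1)"
    using assms(5) by (auto simp: bn_N_def)
  then obtain S where S: "u S \<noteq> 0" "card S + (t - 1) \<le> e"
    by (rule bn_low_degree_monomial_if_not_in_bn_N)
  have "S \<subseteq> {..<e}"
    using u S(1) by (simp add: bn_alg_def)
  then have "t - 1 \<le> card ({..<e} - S)"
    using S(2) by (simp add: card_Diff_subset finite_subset)
  then obtain R where R: "R \<subseteq> {..<e} - S" "card R = t - 1"
    by (rule obtain_subset_with_card_n)
  then have "R \<subseteq> {..<e}" "R \<inter> S = {}"
    by auto
  then have "2 ^ card R \<le> bn.dim (bn_cyclic_submodule e u)"
    by (rule bn_dim_cyclic_submodule_ge[OF u S(1)])
  then show ?thesis
    using R(2) by (simp add: bn_cyclic_submodule_def)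
qed

end
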